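(* Let $\lambda>0$, $B,H>0$, $d,K\ge1$. Let $\mathcal T_1,\dots,\mathcal T_K$ be nonempty disjoint finite index sets with $\sum_{k}|\mathcal T_k|\le T$, and let $\phi_{k,t}\in\mathbb R^d$ ($k\in[K]$, $t\in\mathcal T_k$) satisfy $\|\phi_{k,t}\|_2\le BH$. Define $\Lambda_1=\lambda I$ and $\Lambda_{k+1}=\Lambda_k+\sum_{t\in\mathcal T_k}\phi_{k,t}\phi_{k,t}^\top$. Then $$\sum_{k=1}^K\frac1{|\mathcal T_k|}\sum_{t\in\mathcal T_k}\log\Big(1+|\mathcal T_k|\,\|\phi_{k,t}\|^2_{\Lambda_k^{-1}}\Big)\le d\log\Big(1+\frac{B^2H^2T}{\lambda d}\Big).$$
   Context: $\|v\|_Z=\sqrt{v^\top Zv}$ for a positive definite matrix $Z$. *)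

theory Defs
  imports "HOL-Analysis.Analysis"
begin

definition wnorm :: "real^'n^'n \<Rightarrow> real^'n \<Rightarrow> real" where
  "wnorm Z v = sqrt (v \<bullet> (Z *v v))"

definition outer :: "real^'n \<Rightarrow> real^'n^'n" where
  "outer v = (\<chi> i j. v $ i * v $ j)"

text \<open>Gram matrices: Lam 1 = lam I, Lam (k+1) = Lam k + sum over t in Ts k of phi k t phi k t^T.
  (Lam 0 is an unused dummy value.)\<close>
fun Lam :: "real \<Rightarrow> (nat \<Rightarrow> 'i set) \<Rightarrow> (nat \<Rightarrow> 'i \<Rightarrow> real^'n) \<Rightarrow> nat \<Rightarrow> real^'n^'n" where
  "Lam lam Ts phi 0 = lam *\<^sub>R mat 1"
| "Lam lam Ts phi (Suc 0) = lam *\<^sub>R mat 1"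
| "Lam lam Ts phi (Suc (Suc k)) =
     Lam lam Ts phi (Suc k) + (\<Sum>t\<in>Ts (Suc k). outer (phi (Suc k) t))"

end

theory Submission
  imports Defs
begin

text \<open>
  By the matrix determinant lemma, adding the rank-one matrix \<open>\<phi> \<phi>\<^sup>T\<close> to a positive definite
  \<open>\<Lambda>\<close> multiplies its determinant by \<open>1 + \<parallel>\<phi>\<parallel>\<^sup>2\<close> measured in \<open>\<Lambda>\<^sup>-\<^sup>1\<close>. Adding a whole batch
  \<open>\<Sum>\<^sub>t \<phi>\<^sub>t \<phi>\<^sub>t\<^sup>T\<close> one term at a time, the intermediate inverses shrink by at most the factor
  \<open>1 + \<Sum>\<^sub>t \<parallel>\<phi>\<^sub>t\<parallel>\<^sup>2\<close> (Cauchy-Schwarz for the form \<open>\<Lambda>\<close>), so the determinant still grows by at least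
  that factor. Concavity of the logarithm bounds the batch average of
  \<open>ln (1 + |\<T>\<^sub>k| \<parallel>\<phi>\<^sub>k\<^sub>,\<^sub>t\<parallel>\<^sup>2)\<close> by \<open>ln (1 + \<Sum>\<^sub>t \<parallel>\<phi>\<^sub>k\<^sub>,\<^sub>t\<parallel>\<^sup>2)\<close>, hence by the increment of
  \<open>ln det \<Lambda>\<^sub>k\<close>. The sum telescopes to \<open>ln det \<Lambda>\<^sub>K\<^sub>+\<^sub>1 - d ln \<lambda>\<close>, and Hadamard's inequality with
  AM-GM on the diagonal bounds \<open>det \<Lambda>\<^sub>K\<^sub>+\<^sub>1\<close> by \<open>(trace \<Lambda>\<^sub>K\<^sub>+\<^sub>1 / d)\<^sup>d \<le> (\<lambda> + B\<^sup>2H\<^sup>2T/d)\<^sup>d\<close>.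
\<close>

definition outer_product :: "real^'m \<Rightarrow> real^'n \<Rightarrow> real^'n^'m" where
  "outer_product p q = (\<chi> i j. p $ i * q $ j)"

definition quad_form :: "real^'n^'n \<Rightarrow> real^'n \<Rightarrow> real" where
  "quad_form A x = x \<bullet> (A *v x)"

definition pos_def :: "real^'n^'n \<Rightarrow> bool" where
  "pos_def A \<longleftrightarrow> (\<forall>x. x \<noteq> 0 \<longrightarrow> 0 < quad_form A x)"

definition symmetric_matrix :: "'a^'n^'n \<Rightarrow> bool" where
  "symmetric_matrix A \<longleftrightarrow> transpose A = A"

lemma matrix_add_rdistrib: "((A :: 'a::semiring_1^'n^'m) + B) ** C = A ** C + B ** C"
  by (simp add: matrix_matrix_mult_def vec_eq_iff distrib_right sum.distrib)

lemma matrix_diff_ldistrib: "(A :: 'a::ring_1^'n^'m) ** (B - C) = A ** B - A ** C"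
  by (simp add: matrix_matrix_mult_def vec_eq_iff right_diff_distrib sum_subtractf)

lemma matrix_diff_rdistrib: "((A :: 'a::ring_1^'n^'m) - B) ** C = A ** C - B ** C"
  by (simp add: matrix_matrix_mult_def vec_eq_iff left_diff_distrib sum_subtractf)

lemma transpose_add: "transpose ((A :: 'a::plus^'n^'m) + B) = transpose A + transpose B"
  by (simp add: transpose_def vec_eq_iff)

lemma transpose_diff: "transpose ((A :: 'a::minus^'n^'m) - B) = transpose A - transpose B"
  by (simp add: transpose_def vec_eq_iff)

lemma sum_matrix_vector_mult: "(\<Sum>t\<in>T. M t) *v x = (\<Sum>t\<in>T. M t *v x)"
proof (cases "finite T")
  case True
  then show ?thesis
    by (induction rule: finite_induct) (simp_all add: matrix_vector_mult_add_rdistrib)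
qed simp

lemma matrix_vector_mult_axis: "(A :: real^'n^'m) *v axis j 1 = (\<chi> i. A $ i $ j)"
  by (simp add: vec_eq_iff matrix_vector_mul_component inner_axis)

lemma outer_eq_outer_product: "outer v = outer_product v v"
  by (simp add: outer_def outer_product_def)

lemma outer_product_mult_vec: "outer_product p q *v x = (q \<bullet> x) *\<^sub>R p"
  by (simp add: outer_product_def matrix_vector_mult_def vec_eq_iff inner_vec_def
      sum_distrib_left algebra_simps)

lemma matrix_mult_outer_product: "A ** outer_product p q = outer_product (A *v p) q"
  by (simp add: outer_product_def matrix_matrix_mult_def matrix_vector_mult_def vec_eq_iff
      sum_distrib_left ac_simps)

lemma outer_product_matrix_mult: "outer_product p q ** B = outer_product p (transpose B *v q)"
  by (simp add: outer_product_def matrix_matrix_mult_def matrix_vector_mult_def transpose_def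
      vec_eq_iff sum_distrib_left algebra_simps)

lemma transpose_outer_product: "transpose (outer_product p q) = outer_product q p"
  by (simp add: outer_product_def transpose_def vec_eq_iff)

lemma outer_product_uminus: "outer_product (- p) q = - outer_product p q"
  by (simp add: outer_product_def vec_eq_iff)

lemma trace_outer: "trace (outer w) = (norm w)\<^sup>2"
  by (simp add: trace_def outer_def power2_norm_eq_inner inner_vec_def)

lemma trace_sum: "trace (\<Sum>t\<in>T. M t :: 'a::comm_semiring_1^'n^'n) = (\<Sum>t\<in>T. trace (M t))"
  by (simp add: trace_def sum_component) (rule sum.swap)

lemma trace_scaleR_mat_1: "trace (c *\<^sub>R mat 1 :: real^'n^'n) = real CARD('n) * c"
  by (simp add: trace_def mat_def)

lemma det_scaleR_mat_1: "det (c *\<^sub>R mat 1 :: real^'n^'n) = c ^ CARD('n)"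
  by (simp add: det_diagonal mat_def)

lemma invertible_matrix_inv:
  assumes "invertible A"
  shows "A ** matrix_inv A = mat 1" and "matrix_inv A ** A = mat 1"
proof -
  have "\<exists>A'. A ** A' = mat 1 \<and> A' ** A = mat 1"
    using assms by (simp add: invertible_def)
  then have "A ** matrix_inv A = mat 1 \<and> matrix_inv A ** A = mat 1"
    unfolding matrix_inv_def by (rule someI_ex)
  then show "A ** matrix_inv A = mat 1" and "matrix_inv A ** A = mat 1"
    by auto
qed

lemma invertible_matrix_inv_vector:
  assumes "invertible A"
  shows "A *v (matrix_inv A *v v) = v" and "matrix_inv A *v (A *v v) = v"
  using invertible_matrix_inv[OF assms] by (simp_all add: matrix_vector_mul_assoc)

section \<open>Rank-one updates of the determinant\<close>

lemma det_mat_1_replace_column: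
  "det (\<chi> i l. if l = k then x $ i else (mat 1 :: real^'n^'n) $ i $ l) = x $ k"
  using cramer_lemma[where A = "mat 1 :: real^'n^'n" and k = k and x = x]
  unfolding matrix_vector_mul_lid det_I by simp

text \<open>
  Conjugating by the identity with column \<open>k\<close> replaced by \<open>p\<close> (where \<open>p\<^sub>k \<noteq> 0\<close>) moves the
  update to \<open>I + e\<^sub>k z\<^sup>T\<close>, whose transpose is again of column-replacement form.
\<close>
lemma det_mat_1_add_outer_product: "det (mat 1 + outer_product p q :: real^'n^'n) = 1 + p \<bullet> q"
proof (cases "p = 0")
  case True
  then have "outer_product p q = 0"
    by (simp add: outer_product_def vec_eq_iff)
  with True show ?thesis by simp
next
  case False
  then obtain k where pk: "p $ k \<noteq> 0"
    by (auto simp: vec_eq_iff)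
  define P :: "real^'n^'n" where "P = (\<chi> i l. if l = k then p $ i else (mat 1 :: real^'n^'n) $ i $ l)"
  define e :: "real^'n" where "e = axis k 1"
  define z where "z = transpose P *v q"
  have "P *v e = p"
    unfolding e_def matrix_vector_mult_axis by (simp add: P_def vec_eq_iff)
  then have "P ** (mat 1 + outer_product e z) = P + outer_product p z"
    by (simp add: matrix_add_ldistrib matrix_mult_outer_product)
  moreover have "(mat 1 + outer_product p q) ** P = P + outer_product p z"
    by (simp add: matrix_add_rdistrib outer_product_matrix_mult z_def)
  ultimately have "det (mat 1 + outer_product p q) * det P = det P * det (mat 1 + outer_product e z)"
    by (metis det_mul)
  moreover have "det P = p $ k"
    unfolding P_def by (rule det_mat_1_replace_column)
  ultimately have "det (mat 1 + outer_product p q) = det (transpose (mat 1 + outer_product e z))"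
    using pk by simp
  also have "transpose (mat 1 + outer_product e z) = mat 1 + outer_product z e"
    by (simp add: transpose_add transpose_outer_product)
  also have "\<dots> = (\<chi> i l. if l = k then (e + z) $ i else (mat 1 :: real^'n^'n) $ i $ l)"
    by (simp add: outer_product_def e_def vec_eq_iff axis_def mat_def)
  also have "det \<dots> = (e + z) $ k"
    by (rule det_mat_1_replace_column)
  also have "(e + z) $ k = 1 + p \<bullet> q"
    by (simp add: e_def z_def P_def transpose_def matrix_vector_mult_def inner_vec_def)
  finally show ?thesis .
qed

lemma det_add_outer_product:
  assumes "invertible A"
  shows "det (A + outer_product p q) = det A * (1 + (matrix_inv A *v p) \<bullet> q)"
proof -
  have "A ** (mat 1 + outer_product (matrix_inv A *v p) q) = A + outer_product p q"
    by (simp add: matrix_add_ldistrib matrix_mult_outer_product invertible_matrix_inv_vector[OF assms])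
  then show ?thesis
    by (metis det_mul det_mat_1_add_outer_product)
qed

section \<open>Quadratic forms and positive definite matrices\<close>

lemma quad_form_add: "quad_form (A + B) x = quad_form A x + quad_form B x"
  by (simp add: quad_form_def matrix_vector_mult_add_rdistrib inner_add_right)

lemma quad_form_sum: "quad_form (\<Sum>t\<in>T. M t) x = (\<Sum>t\<in>T. quad_form (M t) x)"
  by (simp add: quad_form_def sum_matrix_vector_mult inner_sum_right)

lemma quad_form_outer_product: "quad_form (outer_product p q) x = (q \<bullet> x) * (x \<bullet> p)"
  by (simp add: quad_form_def outer_product_mult_vec)

lemma quad_form_outer: "quad_form (outer w) x = (w \<bullet> x)\<^sup>2"
  by (simp add: outer_eq_outer_product quad_form_outer_product power2_eq_square inner_commute)

lemma symmetric_matrix_entry: "symmetric_matrix A \<Longrightarrow> A $ i $ k = A $ k $ i"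
  unfolding symmetric_matrix_def by (metis transpose_def vec_lambda_beta)

lemma symmetric_matrix_inner:
  fixes A :: "real^'n^'n"
  assumes "symmetric_matrix A"
  shows "x \<bullet> (A *v y) = y \<bullet> (A *v x)"
proof -
  have "x \<bullet> (A *v y) = (x v* A) \<bullet> y"
    by (simp add: dot_lmul_matrix)
  also have "x v* A = transpose A *v x"
    by simp
  also have "transpose A = A"
    using assms by (simp add: symmetric_matrix_def)
  finally show ?thesis
    by (simp add: inner_commute)
qed

lemma symmetric_matrix_add: "symmetric_matrix A \<Longrightarrow> symmetric_matrix B \<Longrightarrow> symmetric_matrix (A + B)"
  by (simp add: symmetric_matrix_def transpose_add)

lemma symmetric_matrix_sum:
  "(\<And>t. t \<in> T \<Longrightarrow> symmetric_matrix (M t)) \<Longrightarrow> symmetric_matrix (\<Sum>t\<in>T. M t)"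
  by (auto simp: symmetric_matrix_def transpose_def vec_eq_iff)

lemma symmetric_matrix_outer: "symmetric_matrix (outer w)"
  by (simp add: symmetric_matrix_def outer_def transpose_def vec_eq_iff mult.commute)

lemma symmetric_matrix_scaleR_mat_1: "symmetric_matrix (c *\<^sub>R mat 1 :: real^'n^'n)"
  by (simp add: symmetric_matrix_def transpose_def vec_eq_iff mat_def)

lemma quad_form_add_scaleR:
  assumes "symmetric_matrix A"
  shows "quad_form A (x + t *\<^sub>R y) = quad_form A x + 2 * t * (x \<bullet> (A *v y)) + t\<^sup>2 * quad_form A y"
  using symmetric_matrix_inner[OF assms, of y x]
  by (simp add: quad_form_def matrix_vector_right_distrib matrix_vector_mult_scaleR
      inner_add_left inner_add_right power2_eq_square algebra_simps)

lemma pos_def_quad_form_nonneg: "pos_def A \<Longrightarrow> 0 \<le> quad_form A x"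
  by (cases "x = 0") (auto simp: pos_def_def quad_form_def intro: less_imp_le)

lemma pos_def_diag_pos:
  assumes "pos_def A"
  shows "0 < A $ i $ i"
proof -
  have "0 < quad_form A (axis i 1)"
    using assms axis_eq_0_iff[of i "1::real"] by (simp add: pos_def_def)
  then show ?thesis
    by (simp add: quad_form_def matrix_vector_mult_axis inner_axis')
qed

lemma pos_def_invertible:
  assumes "pos_def A"
  shows "invertible A"
proof -
  have "\<forall>x. A *v x = 0 \<longrightarrow> x = 0"
    using assms by (auto simp: pos_def_def quad_form_def)
  then obtain B where "B ** A = mat 1"
    using matrix_left_invertible_ker by blast
  then show ?thesis
    using matrix_left_right_inverse unfolding invertible_def by blast
qed

lemma quad_form_matrix_inv:
  assumes "invertible A"
  shows "quad_form A (matrix_inv A *v w) = w \<bullet> (matrix_inv A *v w)"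
  by (simp add: quad_form_def invertible_matrix_inv_vector[OF assms] inner_commute)

lemma pos_def_inverse_form_nonneg:
  assumes "pos_def A"
  shows "0 \<le> v \<bullet> (matrix_inv A *v v)"
  using quad_form_matrix_inv[OF pos_def_invertible[OF assms]] pos_def_quad_form_nonneg[OF assms]
  by metis

lemma pos_def_scaleR_mat_1: "c > 0 \<Longrightarrow> pos_def (c *\<^sub>R mat 1 :: real^'n^'n)"
  by (simp add: pos_def_def quad_form_def scaleR_matrix_vector_assoc[symmetric])

lemma pos_def_add_sum_outer:
  assumes "pos_def A"
  shows "pos_def (A + (\<Sum>t\<in>T. outer (w t)))"
  using assms unfolding pos_def_def
  by (auto simp: quad_form_add quad_form_sum quad_form_outer intro!: add_pos_nonneg sum_nonneg)

lemma symmetric_matrix_add_sum_outer: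
  "symmetric_matrix A \<Longrightarrow> symmetric_matrix (A + (\<Sum>t\<in>T. outer (w t)))"
  by (intro symmetric_matrix_add symmetric_matrix_sum symmetric_matrix_outer)

lemma wnorm_matrix_inv_squared:
  assumes "pos_def A"
  shows "(wnorm (matrix_inv A) v)\<^sup>2 = v \<bullet> (matrix_inv A *v v)"
  using pos_def_inverse_form_nonneg[OF assms] by (simp add: wnorm_def)

lemma quad_form_cauchy_schwarz:
  assumes "symmetric_matrix A" and psd: "\<And>x. 0 \<le> quad_form A x"
  shows "(x \<bullet> (A *v y))\<^sup>2 \<le> quad_form A x * quad_form A y"
proof -
  let ?a = "quad_form A y" and ?b = "x \<bullet> (A *v y)" and ?c = "quad_form A x"
  have Q: "0 \<le> ?c + 2 * t * ?b + t\<^sup>2 * ?a" for t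
    using psd[of "x + t *\<^sub>R y"] quad_form_add_scaleR[OF assms(1)] by simp
  show ?thesis
  proof (cases "?a = 0")
    case True
    have "?b = 0"
    proof (rule ccontr)
      assume "?b \<noteq> 0"
      have "0 \<le> ?c + 2 * (- (?c + 1) / (2 * ?b)) * ?b + (- (?c + 1) / (2 * ?b))\<^sup>2 * ?a"
        by (rule Q)
      also have "\<dots> = -1"
        using True \<open>?b \<noteq> 0\<close> by (simp add: field_simps)
      finally show False by simp
    qed
    with psd show ?thesis by simp
  next
    case False
    then have a: "?a > 0"
      using psd[of y] by simp
    have "0 \<le> ?c + 2 * (- ?b / ?a) * ?b + (- ?b / ?a)\<^sup>2 * ?a"
      by (rule Q)
    also have "\<dots> = ?c - ?b\<^sup>2 / ?a"
      using a by (simp add: field_simps power2_eq_square)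
    finally show ?thesis
      using a by (simp add: field_simps)
  qed
qed

lemma quad_form_add_sum_outer_le:
  assumes "pos_def A" and "symmetric_matrix A"
  shows "quad_form (A + (\<Sum>t\<in>T. outer (w t))) u
           \<le> (1 + (\<Sum>t\<in>T. w t \<bullet> (matrix_inv A *v w t))) * quad_form A u"
proof -
  have inv: "invertible A"
    using pos_def_invertible[OF assms(1)] .
  have summand: "(w t \<bullet> u)\<^sup>2 \<le> (w t \<bullet> (matrix_inv A *v w t)) * quad_form A u" for t
  proof -
    let ?p = "matrix_inv A *v w t"
    have "w t \<bullet> u = ?p \<bullet> (A *v u)"
      using symmetric_matrix_inner[OF assms(2), of u ?p]
      by (simp add: invertible_matrix_inv_vector[OF inv] inner_commute)
    then have "(w t \<bullet> u)\<^sup>2 \<le> quad_form A ?p * quad_form A u"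
      using quad_form_cauchy_schwarz[OF assms(2) pos_def_quad_form_nonneg[OF assms(1)]] by simp
    then show ?thesis
      by (simp add: quad_form_matrix_inv[OF inv])
  qed
  have "quad_form (A + (\<Sum>t\<in>T. outer (w t))) u = quad_form A u + (\<Sum>t\<in>T. (w t \<bullet> u)\<^sup>2)"
    by (simp add: quad_form_add quad_form_sum quad_form_outer)
  also have "\<dots> \<le> quad_form A u + (\<Sum>t\<in>T. (w t \<bullet> (matrix_inv A *v w t)) * quad_form A u)"
    by (intro add_left_mono sum_mono summand)
  also have "\<dots> = (1 + (\<Sum>t\<in>T. w t \<bullet> (matrix_inv A *v w t))) * quad_form A u"
    by (simp add: sum_distrib_left sum_distrib_right algebra_simps)
  finally show ?thesis .
qed

lemma inverse_form_antimono:
  assumes pdA: "pos_def A" and sA: "symmetric_matrix A"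
    and pdB: "pos_def B" and sB: "symmetric_matrix B" and c: "c > 0"
    and le: "\<And>u. quad_form B u \<le> c * quad_form A u"
  shows "v \<bullet> (matrix_inv A *v v) \<le> c * (v \<bullet> (matrix_inv B *v v))"
proof -
  have iA: "invertible A" and iB: "invertible B"
    using pdA pdB by (simp_all add: pos_def_invertible)
  let ?a = "matrix_inv A *v v" and ?b = "matrix_inv B *v v"
  have "v \<bullet> ?a = ?a \<bullet> (B *v ?b)"
    by (simp add: invertible_matrix_inv_vector[OF iB] inner_commute)
  then have "(v \<bullet> ?a)\<^sup>2 \<le> quad_form B ?a * quad_form B ?b"
    using quad_form_cauchy_schwarz[OF sB pos_def_quad_form_nonneg[OF pdB]] by simp
  also have "\<dots> \<le> (c * quad_form A ?a) * quad_form B ?b"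
    by (rule mult_right_mono[OF le pos_def_quad_form_nonneg[OF pdB]])
  finally have *: "(v \<bullet> ?a)\<^sup>2 \<le> c * (v \<bullet> ?a) * (v \<bullet> ?b)"
    by (simp add: quad_form_matrix_inv[OF iA] quad_form_matrix_inv[OF iB])
  show ?thesis
  proof (cases "v \<bullet> ?a = 0")
    case True
    then show ?thesis
      using pos_def_inverse_form_nonneg[OF pdB, of v] c by simp
  next
    case False
    then have "v \<bullet> ?a > 0"
      using pos_def_inverse_form_nonneg[OF pdA, of v] by simp
    with * show ?thesis
      by (simp add: power2_eq_square mult.assoc mult.left_commute)
  qed
qed

lemma det_add_sum_outer_ge:
  assumes pdA: "pos_def A" and sA: "symmetric_matrix A" and dA: "det A > 0" and fin: "finite T"
  shows "det A * (1 + (\<Sum>t\<in>T. w t \<bullet> (matrix_inv A *v w t))) \<le> det (A + (\<Sum>t\<in>T. outer (w t)))"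
  using fin
proof (induction rule: finite_induct)
  case empty
  then show ?case by simp
next
  case (insert s F)
  define M where "M = A + (\<Sum>t\<in>F. outer (w t))"
  define c where "c = 1 + (\<Sum>t\<in>F. w t \<bullet> (matrix_inv A *v w t))"
  define y where "y = w s \<bullet> (matrix_inv M *v w s)"
  have pdM: "pos_def M" and sM: "symmetric_matrix M"
    unfolding M_def using pdA sA by (simp_all add: pos_def_add_sum_outer symmetric_matrix_add_sum_outer)
  have c: "c \<ge> 1"
    unfolding c_def using pos_def_inverse_form_nonneg[OF pdA] by (simp add: sum_nonneg)
  have "w s \<bullet> (matrix_inv A *v w s) \<le> c * y"
    unfolding y_def
    by (rule inverse_form_antimono[OF pdA sA pdM sM])
      (use c quad_form_add_sum_outer_le[OF pdA sA] in \<open>auto simp: M_def c_def\<close>)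
  then have "det A * (c + w s \<bullet> (matrix_inv A *v w s)) \<le> det A * (c + c * y)"
    using dA by simp
  then have "det A * (1 + (\<Sum>t\<in>insert s F. w t \<bullet> (matrix_inv A *v w t))) \<le> det A * (c + c * y)"
    using insert.hyps by (simp add: c_def ac_simps)
  also have "\<dots> = (det A * c) * (1 + y)"
    by (simp add: algebra_simps)
  also have "\<dots> \<le> det M * (1 + y)"
    using insert.IH pos_def_inverse_form_nonneg[OF pdM]
    by (intro mult_right_mono) (auto simp: M_def c_def y_def)
  also have "\<dots> = det (M + outer_product (w s) (w s))"
    using det_add_outer_product[OF pos_def_invertible[OF pdM]] by (simp add: y_def inner_commute)
  also have "M + outer_product (w s) (w s) = A + (\<Sum>t\<in>insert s F. outer (w t))"
    using insert.hyps by (simp add: M_def outer_eq_outer_product add.assoc add.commute)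
  finally show ?case .
qed

section \<open>Hadamard's inequality\<close>

text \<open>
  The principal submatrix of \<open>A\<close> with row and column \<open>j\<close> deleted, kept inside the same matrix
  type by putting the \<open>j\<close>-th unit vector in the deleted row and column.
\<close>
definition delete_rowcol :: "'n \<Rightarrow> real^'n^'n \<Rightarrow> real^'n^'n" where
  "delete_rowcol j A = (\<chi> i k. if i = j \<or> k = j then (if i = k then 1 else 0) else A $ i $ k)"

lemma symmetric_matrix_delete_rowcol:
  assumes "symmetric_matrix A"
  shows "symmetric_matrix (delete_rowcol j A)"
  by (auto simp: symmetric_matrix_def delete_rowcol_def transpose_def vec_eq_iff
      symmetric_matrix_entry[OF assms])

lemma delete_rowcol_decomposition:
  fixes A :: "real^'n^'n" and j :: 'n
  defines "e \<equiv> axis j 1" and "b \<equiv> \<chi> i. if i = j then 0 else A $ i $ j"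
  assumes "symmetric_matrix A"
  shows "A = delete_rowcol j A + outer_product ((A $ j $ j - 1) *\<^sub>R e + b) e + outer_product e b"
  unfolding vec_eq_iff
proof (intro allI)
  fix i k
  have "A $ j $ k = A $ k $ j"
    using symmetric_matrix_entry[OF assms(3)] .
  then show "A $ i $ k = (delete_rowcol j A + outer_product ((A $ j $ j - 1) *\<^sub>R e + b) e
                           + outer_product e b) $ i $ k"
    by (simp add: delete_rowcol_def outer_product_def e_def b_def axis_def)
qed

lemma pos_def_delete_rowcol:
  fixes A :: "real^'n^'n"
  assumes pdA: "pos_def A" and sA: "symmetric_matrix A"
  shows "pos_def (delete_rowcol j A)"
  unfolding pos_def_def
proof (intro allI impI)
  fix x :: "real^'n"
  assume "x \<noteq> 0"
  define a where "a = A $ j $ j"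
  define e :: "real^'n" where "e = axis j 1"
  define b :: "real^'n" where "b = (\<chi> i. if i = j then 0 else A $ i $ j)"
  define z where "z = x + (- (x $ j)) *\<^sub>R e"
  have ex: "e \<bullet> v = v $ j" for v
    by (simp add: e_def inner_axis')
  have be: "b \<bullet> e = 0" and ee: "e \<bullet> e = 1"
    using ex[of b] ex[of e] by (simp_all add: b_def e_def inner_commute)
  have decomp: "A = delete_rowcol j A + outer_product ((a - 1) *\<^sub>R e + b) e + outer_product e b"
    unfolding a_def e_def b_def by (rule delete_rowcol_decomposition[OF sA])
  have Ae: "A *v e = a *\<^sub>R e + b"
    unfolding e_def matrix_vector_mult_axis by (auto simp: vec_eq_iff a_def b_def axis_def)
  have "quad_form A z = quad_form A x + 2 * (- (x $ j)) * (x \<bullet> (A *v e)) + (- (x $ j))\<^sup>2 * quad_form A e"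
    unfolding z_def by (rule quad_form_add_scaleR[OF sA])
  also have "x \<bullet> (A *v e) = a * x $ j + b \<bullet> x"
    by (simp add: Ae inner_add_right inner_commute ex)
  also have "quad_form A e = a"
    by (simp add: quad_form_def Ae inner_add_right ee inner_commute be)
  finally have qz: "quad_form A z = quad_form A x - a * (x $ j)\<^sup>2 - 2 * x $ j * (b \<bullet> x)"
    by (simp add: algebra_simps power2_eq_square)
  have "quad_form A x = quad_form (delete_rowcol j A + outer_product ((a - 1) *\<^sub>R e + b) e + outer_product e b) x"
    by (simp only: decomp[symmetric])
  also have "\<dots> = quad_form (delete_rowcol j A) x + x $ j * ((a - 1) * x $ j + x \<bullet> b) + (b \<bullet> x) * x $ j"
    by (simp add: quad_form_add quad_form_outer_product inner_add_right inner_commute ex)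
  finally have "quad_form (delete_rowcol j A) x = quad_form A z + (x $ j)\<^sup>2"
    using qz by (simp add: algebra_simps power2_eq_square inner_commute)
  moreover have "x $ j = 0 \<Longrightarrow> 0 < quad_form A z"
    using \<open>x \<noteq> 0\<close> pdA by (simp add: z_def pos_def_def)
  ultimately show "0 < quad_form (delete_rowcol j A) x"
    using pos_def_quad_form_nonneg[OF pdA, of z] by (cases "x $ j = 0") (auto intro: add_nonneg_pos)
qed

text \<open>
  Elimination with the unitriangular matrices \<open>I - m e\<^sup>T\<close> and \<open>I - e m\<^sup>T\<close> turns the bordered matrix
  into \<open>A' + (a - 1 - b\<^sup>Tm) e e\<^sup>T\<close>, whose determinant is known by the matrix determinant lemma.
\<close>
lemma bordered_matrix_schur_complement:
  fixes A' :: "real^'n^'n" and e b :: "real^'n" and a :: real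
  defines "A \<equiv> A' + outer_product ((a - 1) *\<^sub>R e + b) e + outer_product e b"
    and "m \<equiv> matrix_inv A' *v b"
  assumes sA': "symmetric_matrix A'" and iA': "invertible A'" and A'e: "A' *v e = e"
    and ee: "e \<bullet> e = 1" and be: "b \<bullet> e = 0"
  shows "quad_form A (e - m) = a - b \<bullet> m"
    and "det A = (a - b \<bullet> m) * det A'"
proof -
  define s where "s = b \<bullet> m"
  have A'm: "A' *v m = b"
    by (simp add: m_def invertible_matrix_inv_vector[OF iA'])
  have "e \<bullet> m = m \<bullet> (A' *v e)"
    by (simp add: A'e inner_commute)
  also have "\<dots> = e \<bullet> (A' *v m)"
    by (rule symmetric_matrix_inner[OF sA'])
  finally have em: "e \<bullet> m = 0"
    by (simp add: A'm inner_commute be)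
  have Ae: "A *v e = a *\<^sub>R e + b"
    by (simp add: A_def matrix_vector_mult_add_rdistrib outer_product_mult_vec A'e ee be algebra_simps)
  have Am: "A *v m = b + s *\<^sub>R e"
    by (simp add: A_def matrix_vector_mult_add_rdistrib outer_product_mult_vec A'm em s_def inner_commute)
  then have "A *v (e - m) = (a - s) *\<^sub>R e"
    by (simp add: matrix_vector_mult_diff_distrib Ae algebra_simps)
  then show "quad_form A (e - m) = a - b \<bullet> m"
    by (simp add: quad_form_def inner_diff_left ee em s_def inner_commute[of m e])
  define X where "X = A - outer_product (b + s *\<^sub>R e) e"
  have "A ** (mat 1 - outer_product m e) = X"
    by (simp add: X_def matrix_diff_ldistrib matrix_mult_outer_product Am)
  moreover have "det (mat 1 - outer_product m e) = 1"
    using det_mat_1_add_outer_product[of "- m" e] by (simp add: outer_product_uminus em inner_commute)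
  ultimately have dX: "det X = det A"
    by (metis det_mul mult_1_right)
  have "transpose A = A' + outer_product e ((a - 1) *\<^sub>R e + b) + outer_product b e"
    using sA' by (simp add: A_def transpose_add transpose_outer_product symmetric_matrix_def)
  also have "\<dots> = A"
    by (simp add: A_def vec_eq_iff outer_product_def algebra_simps)
  finally have "transpose A = A" .
  then have "transpose X = A - outer_product e (b + s *\<^sub>R e)"
    by (simp add: X_def transpose_diff transpose_outer_product)
  then have tXm: "transpose X *v m = b"
    by (simp add: matrix_vector_mult_diff_rdistrib outer_product_mult_vec Am inner_add_left em s_def)
  have "(mat 1 - outer_product e m) ** X = X - outer_product e b"
    by (simp only: matrix_diff_rdistrib outer_product_matrix_mult matrix_mul_lid tXm)
  also have "\<dots> = A' + outer_product ((a - 1 - s) *\<^sub>R e) e"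
    by (simp add: X_def A_def outer_product_def vec_eq_iff algebra_simps)
  finally have "det (A' + outer_product ((a - 1 - s) *\<^sub>R e) e) = det (mat 1 - outer_product e m) * det X"
    by (metis det_mul)
  also have "det (mat 1 - outer_product e m) = 1"
    using det_mat_1_add_outer_product[of "- e" m] by (simp add: outer_product_uminus em)
  finally have "det X = det (A' + outer_product ((a - 1 - s) *\<^sub>R e) e)"
    by simp
  also have "\<dots> = det A' * (a - s)"
    using det_add_outer_product[OF iA', of "(a - 1 - s) *\<^sub>R e" e] invertible_matrix_inv_vector(2)[OF iA', of e]
    by (simp add: matrix_vector_mult_scaleR A'e ee)
  finally show "det A = (a - b \<bullet> m) * det A'"
    using dX by (simp add: s_def)
qed

lemma det_delete_rowcol_schur:
  fixes A :: "real^'n^'n"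
  assumes pdA: "pos_def A" and sA: "symmetric_matrix A"
  obtains s where "0 \<le> s" and "0 < A $ j $ j - s" and "det A = (A $ j $ j - s) * det (delete_rowcol j A)"
proof -
  define A' where "A' = delete_rowcol j A"
  define e :: "real^'n" where "e = axis j 1"
  define b :: "real^'n" where "b = (\<chi> i. if i = j then 0 else A $ i $ j)"
  define m where "m = matrix_inv A' *v b"
  have pdA': "pos_def A'" and sA': "symmetric_matrix A'"
    unfolding A'_def using pdA sA by (simp_all add: pos_def_delete_rowcol symmetric_matrix_delete_rowcol)
  have A'e: "A' *v e = e"
    unfolding A'_def e_def matrix_vector_mult_axis by (auto simp: vec_eq_iff delete_rowcol_def axis_def)
  have ee: "e \<bullet> e = 1" and be: "b \<bullet> e = 0"
    by (simp_all add: e_def b_def inner_axis)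
  have decomp: "A = A' + outer_product ((A $ j $ j - 1) *\<^sub>R e + b) e + outer_product e b"
    unfolding A'_def e_def b_def by (rule delete_rowcol_decomposition[OF sA])
  note schur = bordered_matrix_schur_complement[OF sA' pos_def_invertible[OF pdA'] A'e ee be,
      of "A $ j $ j", folded decomp m_def]
  show thesis
  proof
    show "0 \<le> b \<bullet> m"
      unfolding m_def by (rule pos_def_inverse_form_nonneg[OF pdA'])
    have "A' *v m = b"
      by (simp add: m_def invertible_matrix_inv_vector[OF pos_def_invertible[OF pdA']])
    then have "e - m \<noteq> 0"
      using A'e ee be by auto
    then have "0 < quad_form A (e - m)"
      using pdA by (simp add: pos_def_def)
    also note schur(1)
    finally show "0 < A $ j $ j - b \<bullet> m" .
    show "det A = (A $ j $ j - b \<bullet> m) * det (delete_rowcol j A)"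
      using schur(2) by (simp add: A'_def)
  qed
qed

lemma hadamard_inequality_on:
  fixes A :: "real^'n^'n"
  assumes "pos_def A" and "symmetric_matrix A"
    and "\<And>i k. i \<notin> S \<or> k \<notin> S \<Longrightarrow> A $ i $ k = (if i = k then 1 else 0)"
  shows "0 < det A \<and> det A \<le> (\<Prod>i\<in>S. A $ i $ i)"
  using finite[of S] assms
proof (induction S arbitrary: A rule: finite_induct)
  case empty
  then have "A = mat 1"
    by (simp add: vec_eq_iff mat_def)
  then show ?case by simp
next
  case (insert j S)
  define A' where "A' = delete_rowcol j A"
  obtain s where s: "0 \<le> s" "0 < A $ j $ j - s" and det: "det A = (A $ j $ j - s) * det A'"
    using det_delete_rowcol_schur[OF insert.prems(1,2)] unfolding A'_def by blast
  have "0 < det A' \<and> det A' \<le> (\<Prod>i\<in>S. A' $ i $ i)"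
  proof (rule insert.IH)
    show "pos_def A'" and "symmetric_matrix A'"
      unfolding A'_def using insert.prems(1,2)
      by (simp_all add: pos_def_delete_rowcol symmetric_matrix_delete_rowcol)
    show "A' $ i $ k = (if i = k then 1 else 0)" if "i \<notin> S \<or> k \<notin> S" for i k
      using that insert.prems(3)[of i k] by (auto simp: A'_def delete_rowcol_def)
  qed
  moreover have "(\<Prod>i\<in>S. A' $ i $ i) = (\<Prod>i\<in>S. A $ i $ i)"
    using insert.hyps(2) by (intro prod.cong) (auto simp: A'_def delete_rowcol_def)
  ultimately have A': "0 < det A'" "det A' \<le> (\<Prod>i\<in>S. A $ i $ i)"
    by simp_all
  have "det A \<le> A $ j $ j * det A'"
    unfolding det using s A' by (intro mult_right_mono) auto
  also have "\<dots> \<le> A $ j $ j * (\<Prod>i\<in>S. A $ i $ i)"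
    using s A' by (intro mult_left_mono) auto
  finally show ?case
    using insert.hyps s A' det by simp
qed

lemma hadamard_inequality:
  fixes A :: "real^'n^'n"
  assumes "pos_def A" and "symmetric_matrix A"
  shows "det A \<le> (\<Prod>i\<in>UNIV. A $ i $ i)"
  using hadamard_inequality_on[OF assms, of UNIV] by simp

lemma pos_def_det_pos:
  fixes A :: "real^'n^'n"
  assumes "pos_def A" and "symmetric_matrix A"
  shows "0 < det A"
  using hadamard_inequality_on[OF assms, of UNIV] by simp

section \<open>Logarithmic potentials\<close>

lemma sum_ln_le_card_mult_ln_mean:
  fixes a :: "'a \<Rightarrow> real"
  assumes "finite I" and "I \<noteq> {}" and pos: "\<And>i. i \<in> I \<Longrightarrow> 0 < a i"
  shows "(\<Sum>i\<in>I. ln (a i)) \<le> real (card I) * ln ((\<Sum>i\<in>I. a i) / real (card I))"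
proof -
  define n where "n = real (card I)"
  define m where "m = (\<Sum>i\<in>I. a i) / n"
  have n: "n > 0"
    using assms(1,2) by (simp add: n_def card_gt_0_iff)
  have m: "m > 0"
    unfolding m_def using n pos assms(1,2) by (intro divide_pos_pos sum_pos) auto
  have "ln (a i) - ln m \<le> a i / m - 1" if "i \<in> I" for i
    using ln_le_minus_one[of "a i / m"] pos[OF that] m by (simp add: ln_div)
  then have "(\<Sum>i\<in>I. ln (a i) - ln m) \<le> (\<Sum>i\<in>I. a i / m - 1)"
    by (rule sum_mono)
  also have "\<dots> = (\<Sum>i\<in>I. a i) / m - n"
    by (simp add: sum_subtractf sum_divide_distrib n_def)
  also have "\<dots> = 0"
    using n m by (simp add: m_def zero_less_divide_iff)
  finally show ?thesis
    by (simp add: sum_subtractf n_def m_def)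
qed

lemma ln_det_le_card_mult_ln_mean_trace:
  fixes A :: "real^'n^'n"
  assumes "pos_def A" and "symmetric_matrix A"
  shows "ln (det A) \<le> real CARD('n) * ln (trace A / real CARD('n))"
proof -
  have diag: "0 < A $ i $ i" for i
    using pos_def_diag_pos[OF assms(1)] .
  have "ln (det A) \<le> ln (\<Prod>i\<in>UNIV. A $ i $ i)"
    using hadamard_inequality[OF assms] pos_def_det_pos[OF assms] by simp
  also have "\<dots> = (\<Sum>i\<in>UNIV. ln (A $ i $ i))"
    by (intro ln_prod) (simp_all add: dual_order.strict_implies_not_eq[OF diag])
  also have "\<dots> \<le> real CARD('n) * ln (trace A / real CARD('n))"
    unfolding trace_def by (rule sum_ln_le_card_mult_ln_mean) (simp_all add: diag)
  finally show ?thesis .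
qed

lemma batch_potential_le_ln_det_increment:
  fixes A :: "real^'n^'n" and w :: "'i \<Rightarrow> real^'n"
  assumes pdA: "pos_def A" and sA: "symmetric_matrix A" and "finite T" and "T \<noteq> {}"
  shows "(1 / real (card T)) * (\<Sum>t\<in>T. ln (1 + real (card T) * (w t \<bullet> (matrix_inv A *v w t))))
           \<le> ln (det (A + (\<Sum>t\<in>T. outer (w t)))) - ln (det A)"
proof -
  define n where "n = real (card T)"
  define x where "x t = w t \<bullet> (matrix_inv A *v w t)" for t
  define S where "S = (\<Sum>t\<in>T. x t)"
  have n: "n > 0"
    using assms(3,4) by (simp add: n_def card_gt_0_iff)
  have x: "0 \<le> x t" for t
    unfolding x_def by (rule pos_def_inverse_form_nonneg[OF pdA])
  have S: "0 \<le> S"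
    unfolding S_def using x by (simp add: sum_nonneg)
  have det: "0 < det A"
    by (rule pos_def_det_pos[OF pdA sA])
  have "(\<Sum>t\<in>T. ln (1 + n * x t)) \<le> n * ln ((\<Sum>t\<in>T. 1 + n * x t) / n)"
    unfolding n_def using assms(3,4) n x
    by (intro sum_ln_le_card_mult_ln_mean) (auto simp: n_def intro: add_pos_nonneg)
  also have "(\<Sum>t\<in>T. 1 + n * x t) / n = 1 + S"
    using n by (simp add: sum.distrib sum_distrib_left sum_distrib_right S_def n_def field_simps)
  finally have "(1 / n) * (\<Sum>t\<in>T. ln (1 + n * x t)) \<le> ln (1 + S)"
    using n by (simp add: field_simps)
  also have "ln (1 + S) = ln (det A * (1 + S)) - ln (det A)"
    using det S by (simp add: ln_mult)
  also have "ln (det A * (1 + S)) \<le> ln (det (A + (\<Sum>t\<in>T. outer (w t))))"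
    using det_add_sum_outer_ge[OF pdA sA det assms(3), of w] det S
    by (intro ln_mono) (simp_all add: S_def x_def)
  finally show ?thesis
    by (simp add: n_def x_def)
qed

section \<open>The Gram matrices\<close>

lemma Lam_Suc:
  "1 \<le> k \<Longrightarrow> Lam lam Ts phi (Suc k) = Lam lam Ts phi k + (\<Sum>t\<in>Ts k. outer (phi k t))"
  by (cases k) auto

lemma pos_def_Lam:
  assumes "lam > 0" and "1 \<le> k"
  shows "pos_def (Lam lam Ts phi k) \<and> symmetric_matrix (Lam lam Ts phi k)"
  using assms(2)
proof (induction k rule: dec_induct)
  case base
  then show ?case
    using assms(1) by (simp add: pos_def_scaleR_mat_1 symmetric_matrix_scaleR_mat_1)
next
  case (step k)
  then show ?case
    by (simp add: Lam_Suc pos_def_add_sum_outer symmetric_matrix_add_sum_outer)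
qed

lemma trace_Lam_le:
  fixes phi :: "nat \<Rightarrow> 'i \<Rightarrow> real^'n"
  assumes "1 \<le> k" and "\<And>j t. j \<in> {1..<k} \<Longrightarrow> t \<in> Ts j \<Longrightarrow> norm (phi j t) \<le> c"
  shows "trace (Lam lam Ts phi k) \<le> real CARD('n) * lam + real (\<Sum>j\<in>{1..<k}. card (Ts j)) * c\<^sup>2"
  using assms
proof (induction k rule: dec_induct)
  case base
  then show ?case
    by (simp add: trace_scaleR_mat_1)
next
  case (step k)
  have "(\<Sum>t\<in>Ts k. (norm (phi k t))\<^sup>2) \<le> real (card (Ts k)) * c\<^sup>2"
    using step.prems[of k] step.hyps norm_ge_zero
    by (intro sum_bounded_above power_mono) (auto intro: order_trans)
  moreover have "trace (Lam lam Ts phi k) \<le> real CARD('n) * lam + real (\<Sum>j\<in>{1..<k}. card (Ts j)) * c\<^sup>2"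
    using step.IH step.prems by simp
  ultimately show ?case
    using step.hyps by (simp add: Lam_Suc trace_add trace_sum trace_outer algebra_simps)
qed

lemma sum_batch_potentials_le_ln_det_Lam:
  fixes phi :: "nat \<Rightarrow> 'i \<Rightarrow> real^'n"
  assumes "lam > 0" and "\<And>k. k \<in> {1..K} \<Longrightarrow> finite (Ts k) \<and> Ts k \<noteq> {}"
  shows "(\<Sum>k\<in>{1..K}. (1 / real (card (Ts k))) *
            (\<Sum>t\<in>Ts k. ln (1 + real (card (Ts k)) *
               (wnorm (matrix_inv (Lam lam Ts phi k)) (phi k t))\<^sup>2)))
         \<le> ln (det (Lam lam Ts phi (Suc K))) - real CARD('n) * ln lam"
proof -
  let ?L = "Lam lam Ts phi"
  have "(\<Sum>k\<in>{1..K}. (1 / real (card (Ts k))) *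
            (\<Sum>t\<in>Ts k. ln (1 + real (card (Ts k)) * (wnorm (matrix_inv (?L k)) (phi k t))\<^sup>2)))
        \<le> (\<Sum>k\<in>{1..K}. ln (det (?L (Suc k))) - ln (det (?L k)))"
  proof (rule sum_mono)
    fix k
    assume k: "k \<in> {1..K}"
    then have L: "pos_def (?L k)" "symmetric_matrix (?L k)"
      using pos_def_Lam[OF assms(1)] by auto
    show "(1 / real (card (Ts k))) *
            (\<Sum>t\<in>Ts k. ln (1 + real (card (Ts k)) * (wnorm (matrix_inv (?L k)) (phi k t))\<^sup>2))
          \<le> ln (det (?L (Suc k))) - ln (det (?L k))"
      using batch_potential_le_ln_det_increment[OF L, of "Ts k" "phi k"] assms(2)[OF k] k
      by (simp add: wnorm_matrix_inv_squared[OF L(1)] Lam_Suc)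
  qed
  also have "\<dots> = ln (det (?L (Suc K))) - ln (det (?L 1))"
    by (rule sum_Suc_diff) simp
  also have "ln (det (?L 1)) = real CARD('n) * ln lam"
    using assms(1) by (simp add: det_scaleR_mat_1 ln_realpow)
  finally show ?thesis .
qed

lemma ln_det_Lam_le:
  fixes phi :: "nat \<Rightarrow> 'i \<Rightarrow> real^'n"
  assumes "lam > 0"
    and "\<And>k t. k \<in> {1..K} \<Longrightarrow> t \<in> Ts k \<Longrightarrow> norm (phi k t) \<le> c"
    and "(\<Sum>k\<in>{1..K}. card (Ts k)) \<le> T"
  shows "ln (det (Lam lam Ts phi (Suc K))) \<le> real CARD('n) * ln (lam + real T * c\<^sup>2 / real CARD('n))"
proof -
  let ?L = "Lam lam Ts phi (Suc K)" and ?d = "real CARD('n)"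
  have L: "pos_def ?L" "symmetric_matrix ?L"
    using pos_def_Lam[OF assms(1), of "Suc K"] by auto
  have "trace ?L \<le> ?d * lam + real (\<Sum>k\<in>{1..<Suc K}. card (Ts k)) * c\<^sup>2"
    using assms(2) by (intro trace_Lam_le) auto
  also have "\<dots> \<le> ?d * lam + real T * c\<^sup>2"
  proof -
    have "real (\<Sum>k\<in>{1..<Suc K}. card (Ts k)) \<le> real T"
      using assms(3) by (simp only: atLeastLessThanSuc_atLeastAtMost of_nat_le_iff)
    then show ?thesis
      by (intro add_left_mono mult_right_mono) simp_all
  qed
  finally have "trace ?L / ?d \<le> (?d * lam + real T * c\<^sup>2) / ?d"
    by (rule divide_right_mono) simp
  also have "\<dots> = lam + real T * c\<^sup>2 / ?d"
    by (simp add: add_divide_distrib)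
  finally have "trace ?L / ?d \<le> lam + real T * c\<^sup>2 / ?d" .
  moreover have "0 < trace ?L"
    unfolding trace_def using pos_def_diag_pos[OF L(1)] by (intro sum_pos) auto
  ultimately have "ln (trace ?L / ?d) \<le> ln (lam + real T * c\<^sup>2 / ?d)"
    by (intro ln_mono) auto
  then show ?thesis
    using ln_det_le_card_mult_ln_mean_trace[OF L] by (smt (verit) mult_left_mono of_nat_0_le_iff)
qed

text \<open>The disjointness of the index sets \<open>Ts k\<close> is not needed.\<close>
theorem mainTheorem10:
  fixes lam B H :: real and K T :: nat
    and Ts :: "nat \<Rightarrow> 'i set"
    and phi :: "nat \<Rightarrow> 'i \<Rightarrow> real^'d"
  assumes "lam > 0" and "B > 0" and "H > 0" and "K \<ge> 1"
    and "\<And>k. k \<in> {1..K} \<Longrightarrow> finite (Ts k) \<and> Ts k \<noteq> {}"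
    and "\<And>k j. k \<in> {1..K} \<Longrightarrow> j \<in> {1..K} \<Longrightarrow> k \<noteq> j \<Longrightarrow> Ts k \<inter> Ts j = {}"
    and "(\<Sum>k\<in>{1..K}. card (Ts k)) \<le> T"
    and "\<And>k t. k \<in> {1..K} \<Longrightarrow> t \<in> Ts k \<Longrightarrow> norm (phi k t) \<le> B * H"
  shows "(\<Sum>k\<in>{1..K}. (1 / real (card (Ts k))) *
            (\<Sum>t\<in>Ts k. ln (1 + real (card (Ts k)) *
               (wnorm (matrix_inv (Lam lam Ts phi k)) (phi k t))\<^sup>2)))
         \<le> real CARD('d) * ln (1 + B\<^sup>2 * H\<^sup>2 * real T / (lam * real CARD('d)))"
proof -
  let ?d = "real CARD('d)" and ?c = "B * H"
  have potentials: "(\<Sum>k\<in>{1..K}. (1 / real (card (Ts k))) *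
            (\<Sum>t\<in>Ts k. ln (1 + real (card (Ts k)) *
               (wnorm (matrix_inv (Lam lam Ts phi k)) (phi k t))\<^sup>2)))
        \<le> ln (det (Lam lam Ts phi (Suc K))) - ?d * ln lam"
    using assms(1,5) by (rule sum_batch_potentials_le_ln_det_Lam)
  have ratio_pos: "0 < 1 + B\<^sup>2 * H\<^sup>2 * real T / (lam * ?d)"
    using assms(1) by (simp add: add_pos_nonneg)
  have "ln (det (Lam lam Ts phi (Suc K))) \<le> ?d * ln (lam + real T * ?c\<^sup>2 / ?d)"
    using assms(1,8,7) by (rule ln_det_Lam_le)
  also have "lam + real T * ?c\<^sup>2 / ?d = lam * (1 + B\<^sup>2 * H\<^sup>2 * real T / (lam * ?d))"
    using assms(1) by (simp add: field_simps power_mult_distrib)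
  also have "ln \<dots> = ln lam + ln (1 + B\<^sup>2 * H\<^sup>2 * real T / (lam * ?d))"
    using assms(1) ratio_pos by (simp add: ln_mult)
  finally show ?thesis
    using potentials by (simp add: distrib_left)
qed

end
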